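(* Let $a=\log_2 3$. For integers $K\ge 1$ and $1\le\ell\le K$ define $g_K(\ell)=\max(0,\,a-K/\ell)$, let $S^+(K)=\{1\le\ell\le K: g_K(\ell)>0\}$, and define $\Theta_K=\max_{\ell\in S^+(K)}g_K(\ell)\,/\,\min_{\ell\in S^+(K)}g_K(\ell)$. Then: (1) $\max_{S^+(K)}g_K=a-1$, attained at $\ell=K$, and $\min_{S^+(K)}g_K=a-K/\ell_*(K)$ with $\ell_*(K)=\lfloor K/a\rfloor+1$. (2) Writing $K/a=\lfloor K/a\rfloor+r_K$ with $r_K\in(0,1)$, $$\Theta_K=\frac{a-1}{a}\cdot\frac{\lfloor K/a\rfloor+1}{1-r_K}.$$ (3) The sequence $(\Theta_K)$ is unbounded; along the numerators of the even-indexed convergents of the continued fraction of $\log_2 3$, $K\in\{3,19,84,1054,50508,176251,\ldots\}$, one has $r_K\to 1^-$ and $\Theta_K\to\infty$. *)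

theory Defs
  imports "HOL-Analysis.Analysis"
begin

definition a_log :: real where "a_log = log 2 3"

definition gK :: "nat \<Rightarrow> nat \<Rightarrow> real" where
  "gK K l = max 0 (a_log - real K / real l)"

definition Splus :: "nat \<Rightarrow> nat set" where
  "Splus K = {l \<in> {1..K}. gK K l > 0}"

definition Theta :: "nat \<Rightarrow> real" where
  "Theta K = Max (gK K ` Splus K) / Min (gK K ` Splus K)"

definition lstar :: "nat \<Rightarrow> nat" where
  "lstar K = nat \<lfloor>real K / a_log\<rfloor> + 1"

definition rK :: "nat \<Rightarrow> real" where
  "rK K = real K / a_log - of_int \<lfloor>real K / a_log\<rfloor>"

fun cf_rem :: "real \<Rightarrow> nat \<Rightarrow> real" where
  "cf_rem x 0 = x"
| "cf_rem x (Suc n) = 1 / (cf_rem x n - of_int \<lfloor>cf_rem x n\<rfloor>)"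

definition cf_coeff :: "real \<Rightarrow> nat \<Rightarrow> int" where
  "cf_coeff x n = \<lfloor>cf_rem x n\<rfloor>"

fun conv_num :: "real \<Rightarrow> nat \<Rightarrow> int" where
  "conv_num x 0 = cf_coeff x 0"
| "conv_num x (Suc 0) = cf_coeff x 1 * cf_coeff x 0 + 1"
| "conv_num x (Suc (Suc n)) = cf_coeff x (Suc (Suc n)) * conv_num x (Suc n) + conv_num x n"

definition Kseq :: "nat \<Rightarrow> nat" where
  "Kseq n = nat (conv_num a_log (2 * (n + 1)))"

end

theory Submission
  imports Defs
begin

text \<open>Let a = log_2 3, which is irrational, so K/a is never an integer. On 1 <= l <= K the
  function g_K(l) = a - K/l is increasing and positive exactly for l > K/a, hence
  S^+(K) = {l_*(K)..K}; the maximum a - 1 is attained at K, the minimum at l_*(K), and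
  l_*(K) = K/a + (1 - r_K) gives the closed form of Theta_K.

  If K = p is the numerator of an even-indexed convergent p/q < a, then K/a = q - e/a with
  e = q a - p in (0, 1), so floor(K/a) = q - 1, r_K = 1 - e/a and Theta_K = (a - 1) q / e.
  Along the convergents e tends to 0, so r_K tends to 1 from below and Theta_K to infinity.

  The listed values of K come from the partial quotients 1, 1, 1, 2, 2, 3, 1, 5, 2, 23, 2, 2, 1
  of a. These are forced by 176251/111202 < a < 301994/190537, i.e. by
  2^176251 < 3^111202 and 3^190537 < 2^301994, which are checked by fixed-point interval
  arithmetic along the recursion of the convergents.\<close>

section \<open>Continued fractions of an irrational number\<close>

text \<open>Numerators and denominators of the convergents, indexed so that cf_num x (n + 2) is
  conv_num x n; the first two values are p_(-2) = 0, p_(-1) = 1 and q_(-2) = 1, q_(-1) = 0.\<close>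

fun cf_num :: "real \<Rightarrow> nat \<Rightarrow> int" where
  "cf_num x 0 = 0"
| "cf_num x (Suc 0) = 1"
| "cf_num x (Suc (Suc n)) = cf_coeff x n * cf_num x (Suc n) + cf_num x n"

fun cf_den :: "real \<Rightarrow> nat \<Rightarrow> int" where
  "cf_den x 0 = 1"
| "cf_den x (Suc 0) = 0"
| "cf_den x (Suc (Suc n)) = cf_coeff x n * cf_den x (Suc n) + cf_den x n"

definition cf_err :: "real \<Rightarrow> nat \<Rightarrow> real" where
  "cf_err x n = of_int (cf_den x n) * x - of_int (cf_num x n)"

lemma conv_num_eq_cf_num: "conv_num x n = cf_num x (Suc (Suc n))"
  by (induction x n rule: conv_num.induct) (simp_all add: numeral_2_eq_2)

lemma cf_num_numeral:
  "cf_num x (numeral k) =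
     cf_coeff x (numeral k - 2) * cf_num x (numeral k - 1) + cf_num x (numeral k - 2)"
  if "(2::nat) \<le> numeral k"
proof -
  have "numeral k = Suc (Suc (numeral k - 2))"
    using that by linarith
  then show ?thesis
    by (metis cf_num.simps(3) diff_Suc_1)
qed

lemma cf_err_rec: "cf_err x (Suc (Suc n)) = of_int (cf_coeff x n) * cf_err x (Suc n) + cf_err x n"
  by (simp add: cf_err_def algebra_simps)

lemma cf_rem_Suc_eq: "cf_rem x (Suc n) = 1 / (cf_rem x n - of_int (cf_coeff x n))"
  by (simp add: cf_coeff_def)

declare cf_rem.simps(2) [simp del]

lemma cf_frac_less_1: "cf_rem x n - of_int (cf_coeff x n) < 1"
  unfolding cf_coeff_def by linarith

context
  fixes x :: real
  assumes irrational: "x \<notin> \<rat>"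
begin

lemma cf_rem_irrational: "cf_rem x n \<notin> \<rat>"
proof (induction n)
  case (Suc n)
  have "cf_rem x n = of_int (cf_coeff x n) + inverse (cf_rem x (Suc n))"
    by (simp add: cf_rem_Suc_eq)
  with Suc show ?case by auto
qed (use irrational in simp)

lemma cf_frac_pos: "0 < cf_rem x n - of_int (cf_coeff x n)"
proof -
  have "cf_rem x n \<noteq> of_int (cf_coeff x n)"
    using cf_rem_irrational[of n] by auto
  moreover have "of_int (cf_coeff x n) \<le> cf_rem x n"
    by (simp add: cf_coeff_def)
  ultimately show ?thesis
    by simp
qed

lemma cf_coeff_Suc_ge_1: "1 \<le> cf_coeff x (Suc n)"
proof -
  have "1 < cf_rem x (Suc n)"
    using cf_frac_pos[of n] cf_frac_less_1[of x n] by (simp add: cf_rem_Suc_eq)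
  then show ?thesis
    unfolding cf_coeff_def by linarith
qed

lemma cf_rem_eq_err_ratio:
  "cf_err x (Suc n) \<noteq> 0 \<and> cf_rem x n = - cf_err x n / cf_err x (Suc n)"
proof (induction n)
  case 0
  then show ?case by (simp add: cf_err_def)
next
  case (Suc n)
  define f where "f = cf_rem x n - of_int (cf_coeff x n)"
  have f: "0 < f" "cf_rem x (Suc n) = 1 / f"
    using cf_frac_pos[of n] by (simp_all add: f_def cf_rem_Suc_eq)
  have "cf_err x n = - cf_rem x n * cf_err x (Suc n)"
    using Suc.IH by (simp add: field_simps)
  then have "cf_err x (Suc (Suc n)) = - f * cf_err x (Suc n)"
    by (simp add: cf_err_rec f_def algebra_simps)
  with f Suc.IH show ?case
    by (simp add: field_simps)
qed

lemma cf_err_Suc_Suc: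
  "cf_err x (Suc (Suc n)) = - (cf_rem x n - of_int (cf_coeff x n)) * cf_err x (Suc n)"
  using cf_rem_eq_err_ratio[of n] by (simp add: cf_err_rec field_simps)

lemma cf_err_sign: "0 < (-1) ^ Suc n * cf_err x (Suc n)"
proof (induction n)
  case 0
  then show ?case by (simp add: cf_err_def)
next
  case (Suc n)
  have "(-1) ^ Suc (Suc n) * cf_err x (Suc (Suc n))
      = (cf_rem x n - of_int (cf_coeff x n)) * ((-1) ^ Suc n * cf_err x (Suc n))"
    by (simp add: cf_err_Suc_Suc algebra_simps)
  also have "\<dots> > 0"
    by (rule mult_pos_pos[OF cf_frac_pos Suc.IH])
  finally show ?case .
qed

lemma cf_err_even_pos: "0 < cf_err x (2 * n + 2)"
  using cf_err_sign[of "2 * n + 1"] by simp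

lemma cf_err_abs_Suc_Suc_le: "\<bar>cf_err x (Suc (Suc n))\<bar> \<le> \<bar>cf_err x (Suc n)\<bar>"
proof -
  have "\<bar>cf_err x (Suc (Suc n))\<bar> = (cf_rem x n - of_int (cf_coeff x n)) * \<bar>cf_err x (Suc n)\<bar>"
    using cf_frac_pos[of n] by (simp add: cf_err_Suc_Suc abs_mult)
  with cf_frac_pos[of n] cf_frac_less_1[of x n] show ?thesis
    by (simp add: mult_left_le_one_le)
qed

text \<open>Two consecutive fractional parts f, g satisfy g = 1/f - a with a \<ge> 1,
  so f g \<le> 1 - f and f g < f, whence f g \<le> 1/2.\<close>

lemma cf_err_abs_halves: "\<bar>cf_err x (n + 3)\<bar> \<le> \<bar>cf_err x (Suc n)\<bar> / 2"
proof -
  define f where "f = cf_rem x n - of_int (cf_coeff x n)"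
  define g where "g = cf_rem x (Suc n) - of_int (cf_coeff x (Suc n))"
  have f: "0 < f" "f < 1" and g: "0 < g" "g < 1"
    using cf_frac_pos[of n] cf_frac_pos[of "Suc n"]
      cf_frac_less_1[of x n] cf_frac_less_1[of x "Suc n"]
    unfolding f_def g_def by auto
  have "g = 1 / f - of_int (cf_coeff x (Suc n))"
    by (simp add: g_def f_def cf_rem_Suc_eq)
  then have "f * g = 1 - f * of_int (cf_coeff x (Suc n))"
    using f by (simp add: field_simps)
  also have "\<dots> \<le> 1 - f"
    using cf_coeff_Suc_ge_1[of n] f by simp
  finally have "f * g \<le> 1 / 2"
    using mult_strict_left_mono[OF g(2) f(1)] by linarith
  moreover have "\<bar>cf_err x (n + 3)\<bar> = f * g * \<bar>cf_err x (Suc n)\<bar>"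
    using f g by (simp add: numeral_3_eq_3 cf_err_Suc_Suc abs_mult f_def g_def)
  ultimately show ?thesis
    using mult_right_mono[of "f * g" "1 / 2" "\<bar>cf_err x (Suc n)\<bar>"] by simp
qed

lemma cf_err_even_bound: "\<bar>cf_err x (2 * n + 2)\<bar> \<le> (1 / 2) ^ n"
proof (induction n)
  case 0
  show ?case
    using cf_err_abs_Suc_Suc_le[of 0] by (simp add: cf_err_def)
next
  case (Suc n)
  have "\<bar>cf_err x (2 * Suc n + 2)\<bar> \<le> \<bar>cf_err x (2 * n + 2)\<bar> / 2"
    using cf_err_abs_halves[of "2 * n + 1"] by (simp add: numeral_eq_Suc)
  with Suc show ?case by simp
qed

lemma cf_err_even_tendsto_0: "(\<lambda>n. cf_err x (2 * n + 2)) \<longlonglongrightarrow> 0"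
proof (rule Lim_null_comparison)
  show "\<forall>\<^sub>F n in sequentially. norm (cf_err x (2 * n + 2)) \<le> (1 / 2) ^ n"
    using cf_err_even_bound by simp
qed (simp add: LIMSEQ_realpow_zero)

lemma cf_den_nonneg: "0 \<le> cf_den x n \<and> 0 \<le> cf_den x (Suc n)"
proof (induction n)
  case (Suc n)
  have "0 \<le> cf_coeff x n * cf_den x (Suc n)"
  proof (cases "n = 0")
    case False
    then have "1 \<le> cf_coeff x n"
      using cf_coeff_Suc_ge_1[of "n - 1"] by simp
    with Suc.IH show ?thesis
      by (intro mult_nonneg_nonneg) auto
  qed simp
  with Suc.IH show ?case
    by simp
qed simp

lemma cf_den_Suc_Suc_pos: "1 \<le> cf_den x (Suc (Suc n))"
proof (induction n)
  case (Suc n)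
  have "1 * 1 \<le> cf_coeff x (Suc n) * cf_den x (Suc (Suc n))"
    using cf_coeff_Suc_ge_1[of n] Suc by (intro mult_mono) auto
  with cf_den_nonneg[of n] show ?case
    by simp
qed simp

context
  assumes gt_1: "1 < x"
begin

lemma cf_num_even_div_eq:
  "of_int (cf_num x (2 * n + 2)) / x = of_int (cf_den x (2 * n + 2)) - cf_err x (2 * n + 2) / x"
  using gt_1 by (simp add: cf_err_def field_simps)

lemma cf_err_even_div_bounds: "0 < cf_err x (2 * n + 2) / x \<and> cf_err x (2 * n + 2) / x < 1"
proof -
  have "\<bar>cf_err x (2 * n + 2)\<bar> \<le> 1"
    using cf_err_even_bound[of n] by (rule order_trans) (simp add: power_le_one)
  then have "cf_err x (2 * n + 2) \<le> 1"
    by (rule abs_le_D1)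
  then show ?thesis
    using cf_err_even_pos[of n] gt_1 by simp
qed

lemma floor_cf_num_even_div: "\<lfloor>of_int (cf_num x (2 * n + 2)) / x\<rfloor> = cf_den x (2 * n + 2) - 1"
  unfolding floor_eq_iff cf_num_even_div_eq using cf_err_even_div_bounds[of n] by simp

lemma cf_num_even_pos: "0 < cf_num x (2 * n + 2)"
proof -
  have "1 \<le> cf_den x (2 * n + 2)"
    using cf_den_Suc_Suc_pos[of "2 * n"] by (simp only: add_2_eq_Suc')
  then have "0 < of_int (cf_num x (2 * n + 2)) / x"
    unfolding cf_num_even_div_eq using cf_err_even_div_bounds[of n] by linarith
  with gt_1 show ?thesis
    by (simp add: zero_less_divide_iff del: cf_num.simps)
qed

end

end

text \<open>cf_prefix_cert cs p q p' q' certifies that every real strictly between p/q and p'/q'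
  has partial quotients beginning with cs: if a complete quotient r lies in such an interval
  and has integer part c, the next one, 1/(r - c), lies between q'/(p' - c q') and
  q/(p - c q).\<close>

fun cf_prefix_cert :: "int list \<Rightarrow> int \<Rightarrow> int \<Rightarrow> int \<Rightarrow> int \<Rightarrow> bool" where
  "cf_prefix_cert [] p q p' q' \<longleftrightarrow> True"
| "cf_prefix_cert (c # cs) p q p' q' \<longleftrightarrow>
     0 < q \<and> 0 < q' \<and> c * q \<le> p \<and> p' \<le> (c + 1) * q' \<and>
     (cs \<noteq> [] \<longrightarrow> c * q < p \<and> cf_prefix_cert cs q' (p' - c * q') q (p - c * q))"

lemma cf_coeff_eq_if_between:
  assumes "of_int p / of_int q < cf_rem x n" "cf_rem x n < of_int p' / of_int q'"
    and "0 < q" "0 < q'" "c * q \<le> p" "p' \<le> (c + 1) * q'"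
  shows "cf_coeff x n = c"
proof -
  have "of_int c \<le> of_int p / (of_int q :: real)"
    using assms(3,5) by (simp add: field_simps flip: of_int_mult of_int_le_iff)
  moreover have "of_int p' / of_int q' \<le> (of_int c + 1 :: real)"
    using assms(4,6) by (simp add: field_simps flip: of_int_mult of_int_le_iff)
  ultimately show ?thesis
    using assms(1,2) unfolding cf_coeff_def floor_eq_iff by linarith
qed

lemma cf_rem_Suc_between:
  assumes "of_int p / of_int q < cf_rem x n" "cf_rem x n < of_int p' / of_int q'"
    and "0 < q" "0 < q'" "c * q < p" "p' \<le> (c + 1) * q'"
  shows "of_int q' / of_int (p' - c * q') < cf_rem x (Suc n)
    \<and> cf_rem x (Suc n) < of_int q / of_int (p - c * q)"
proof -
  define r where "r = cf_rem x n - of_int c"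
  have "cf_coeff x n = c"
    using assms by (intro cf_coeff_eq_if_between) auto
  then have rem: "cf_rem x (Suc n) = 1 / r"
    by (simp add: cf_rem_Suc_eq r_def)
  have lo: "of_int (p - c * q) / of_int q < r" and hi: "r < of_int (p' - c * q') / of_int q'"
    using assms(1-4) by (simp_all add: r_def field_simps)
  have lo_pos: "0 < of_int (p - c * q) / (of_int q :: real)"
    using assms(3,5) by (intro divide_pos_pos of_int_pos) auto
  then have r_pos: "0 < r" and hi_pos: "0 < of_int (p' - c * q') / (of_int q' :: real)"
    using lo hi by linarith+
  have "1 / (of_int (p' - c * q') / of_int q') < 1 / r"
    using hi r_pos hi_pos by (intro divide_strict_left_mono mult_pos_pos) auto
  moreover have "1 / r < 1 / (of_int (p - c * q) / of_int q)"
    using lo_pos lo r_pos by (intro divide_strict_left_mono mult_pos_pos) auto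
  ultimately show ?thesis
    unfolding rem by simp
qed

lemma cf_coeff_eq_if_cert:
  assumes "cf_prefix_cert cs p q p' q'"
    and "of_int p / of_int q < cf_rem x n" "cf_rem x n < of_int p' / of_int q'"
    and "i < length cs"
  shows "cf_coeff x (n + i) = cs ! i"
  using assms
proof (induction cs arbitrary: n i p q p' q')
  case (Cons c cs)
  show ?case
  proof (cases i)
    case 0
    with Cons.prems show ?thesis
      by (auto intro: cf_coeff_eq_if_between)
  next
    case (Suc j)
    with Cons.prems have cert: "cf_prefix_cert cs q' (p' - c * q') q (p - c * q)"
      and between: "of_int q' / of_int (p' - c * q') < cf_rem x (Suc n)"
        "cf_rem x (Suc n) < of_int q / of_int (p - c * q)"
      using cf_rem_Suc_between[of p q x n p' q' c] by auto
    from Cons.IH[OF cert between] Suc Cons.prems(4) show ?thesis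
      by simp
  qed
qed simp

section \<open>Arithmetic of log_2 3\<close>

lemma a_log_eq: "a_log = ln 3 / ln 2"
  by (simp add: a_log_def log_def)

lemma a_log_gt_1: "1 < a_log"
  by (simp add: a_log_eq)

lemma less_mult_a_log_iff: "real p < real q * a_log \<longleftrightarrow> (2::real) ^ p < 3 ^ q"
proof -
  have "(2::real) ^ p < 3 ^ q \<longleftrightarrow> ln ((2::real) ^ p) < ln (3 ^ q)"
    by simp
  also have "\<dots> \<longleftrightarrow> real p < real q * a_log"
    by (simp add: ln_realpow a_log_eq field_simps)
  finally show ?thesis ..
qed

lemma mult_a_log_less_iff: "real q * a_log < real p \<longleftrightarrow> (3::real) ^ q < 2 ^ p"
proof -
  have "(3::real) ^ q < 2 ^ p \<longleftrightarrow> ln ((3::real) ^ q) < ln (2 ^ p)"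
    by simp
  also have "\<dots> \<longleftrightarrow> real q * a_log < real p"
    by (simp add: ln_realpow a_log_eq field_simps)
  finally show ?thesis ..
qed

lemma a_log_irrational: "a_log \<notin> \<rat>"
proof
  assume "a_log \<in> \<rat>"
  then obtain m n :: int where n: "0 < n" and mn: "a_log = of_int m / of_int n"
    by (auto elim: Rats_cases')
  have "of_int m = a_log * of_int n"
    using n by (simp add: mn)
  then have "0 < real_of_int m"
    using n a_log_gt_1 by simp
  then have m: "0 < m"
    by simp
  have "real (nat n) * a_log = real (nat m)"
    using \<open>of_int m = a_log * of_int n\<close> n m by simp
  then have "\<not> (2::real) ^ nat m < 3 ^ nat n" "\<not> (3::real) ^ nat n < 2 ^ nat m"
    by (simp_all flip: less_mult_a_log_iff mult_a_log_less_iff)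
  then have "(3::real) ^ nat n = 2 ^ nat m"
    by linarith
  then have "(3::nat) ^ nat n = 2 ^ nat m"
    by (metis of_nat_eq_iff of_nat_numeral of_nat_power)
  then have "even ((3::nat) ^ nat n)"
    using m by simp
  then show False
    by simp
qed

section \<open>Enclosures of 3^q / 2^p\<close>

definition encloses :: "nat \<Rightarrow> nat \<times> nat \<Rightarrow> real \<Rightarrow> bool" where
  "encloses N b y \<longleftrightarrow> real (fst b) \<le> y * 2 ^ N \<and> y * 2 ^ N \<le> real (snd b)"

definition encl_mult :: "nat \<Rightarrow> nat \<times> nat \<Rightarrow> nat \<times> nat \<Rightarrow> nat \<times> nat" where
  "encl_mult N b c = (fst b * fst c div 2 ^ N, snd b * snd c div 2 ^ N + 1)"

fun encl_pow :: "nat \<Rightarrow> nat \<times> nat \<Rightarrow> nat \<Rightarrow> nat \<times> nat" where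
  "encl_pow N b 0 = (2 ^ N, 2 ^ N)"
| "encl_pow N b (Suc n) = encl_mult N b (encl_pow N b n)"

lemma encl_pow_numeral [simp]:
  "encl_pow N b (numeral k) = encl_mult N b (encl_pow N b (pred_numeral k))"
  by (simp add: numeral_eq_Suc)

lemma encloses_mult:
  assumes "encloses N b y" "encloses N c z"
  shows "encloses N (encl_mult N b c) (y * z)"
proof -
  define D :: real where "D = 2 ^ N"
  have D: "0 < D"
    by (simp add: D_def)
  have b: "real (fst b) \<le> y * D" "y * D \<le> real (snd b)"
    and c: "real (fst c) \<le> z * D" "z * D \<le> real (snd c)"
    using assms by (simp_all add: encloses_def D_def)
  have "real (fst b * fst c div 2 ^ N) \<le> real (fst b) * real (fst c) / D"
    using of_nat_div_le_of_nat[of "fst b * fst c" "2 ^ N"] by (simp add: D_def)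
  also have "\<dots> \<le> (y * D) * (z * D) / D"
    using b c D by (intro divide_right_mono mult_mono) auto
  also have "\<dots> = y * z * D"
    using D by simp
  finally have lower: "real (fst b * fst c div 2 ^ N) \<le> y * z * D" .
  have "y * z * D = (y * D) * (z * D) / D"
    using D by simp
  also have "\<dots> \<le> real (snd b) * real (snd c) / D"
    using b c D by (intro divide_right_mono mult_mono) auto
  also have "\<dots> < real (snd b * snd c div 2 ^ N) + 1"
    using of_nat_of_nat_div_aux[of "snd b * snd c" "2 ^ N", where 'a = real]
      mod_less_divisor[of "2 ^ N" "snd b * snd c"]
    by (simp add: D_def)
  finally have upper: "y * z * D \<le> real (snd b * snd c div 2 ^ N + 1)"
    by simp
  show ?thesis
    using lower upper by (simp add: encloses_def encl_mult_def D_def)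
qed

lemma encloses_pow: "encloses N b y \<Longrightarrow> encloses N (encl_pow N b n) (y ^ n)"
proof (induction n)
  case (Suc n)
  then show ?case
    using encloses_mult[of N b y "encl_pow N b n" "y ^ n"] by simp
qed (simp add: encloses_def)

definition ratio_encl :: "nat \<Rightarrow> nat \<times> nat \<times> (nat \<times> nat) \<Rightarrow> bool" where
  "ratio_encl N s \<longleftrightarrow> (case s of (p, q, b) \<Rightarrow> encloses N b (3 ^ q / 2 ^ p))"

text \<open>Along the recursion 3^q_(k+2)/2^p_(k+2) = (3^q_(k+1)/2^p_(k+1))^a_k * 3^q_k/2^p_k of the
  convergents p_k/q_k all ratios stay close to 1, so 64 fractional bits suffice.\<close>

fun ratio_encl_steps ::
  "nat \<Rightarrow> nat list \<Rightarrow> nat \<times> nat \<times> (nat \<times> nat) \<Rightarrow> nat \<times> nat \<times> (nat \<times> nat)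
     \<Rightarrow> (nat \<times> nat \<times> (nat \<times> nat)) \<times> (nat \<times> nat \<times> (nat \<times> nat))" where
  "ratio_encl_steps N [] s t = (s, t)"
| "ratio_encl_steps N (c # cs) (p, q, b) (p', q', b') =
     ratio_encl_steps N cs (p', q', b') (c * p' + p, c * q' + q, encl_mult N (encl_pow N b' c) b)"

lemma ratio_encl_steps_sound:
  "ratio_encl N s \<Longrightarrow> ratio_encl N t \<Longrightarrow>
     ratio_encl N (fst (ratio_encl_steps N cs s t)) \<and> ratio_encl N (snd (ratio_encl_steps N cs s t))"
proof (induction N cs s t rule: ratio_encl_steps.induct)
  case (2 N c cs p q b p' q' b')
  have "(3::real) ^ (c * q' + q) / 2 ^ (c * p' + p) = (3 ^ q' / 2 ^ p') ^ c * (3 ^ q / 2 ^ p)"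
    by (simp add: power_add power_divide power_mult [symmetric] mult.commute)
  moreover have "encloses N (encl_mult N (encl_pow N b' c) b) ((3 ^ q' / 2 ^ p') ^ c * (3 ^ q / 2 ^ p))"
    using "2.prems" by (intro encloses_mult encloses_pow) (simp_all add: ratio_encl_def)
  ultimately have "ratio_encl N (c * p' + p, c * q' + q, encl_mult N (encl_pow N b' c) b)"
    by (simp only: ratio_encl_def prod.case)
  with "2.IH" "2.prems"(2) show ?case
    by simp
qed simp

lemma less_mult_a_log_if_ratio_encl:
  assumes "ratio_encl N (p, q, (L, U))" "2 ^ N < L"
  shows "real p < real q * a_log"
proof -
  have "(2::real) ^ N < real L"
    using assms(2) by (metis of_nat_less_iff of_nat_numeral of_nat_power)
  also have "\<dots> \<le> 3 ^ q / 2 ^ p * 2 ^ N"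
    using assms(1) by (simp add: ratio_encl_def encloses_def)
  finally have "(2::real) ^ p < 3 ^ q"
    by (simp add: field_simps)
  then show ?thesis
    by (simp add: less_mult_a_log_iff)
qed

lemma mult_a_log_less_if_ratio_encl:
  assumes "ratio_encl N (p, q, (L, U))" "U < 2 ^ N"
  shows "real q * a_log < real p"
proof -
  have "3 ^ q / 2 ^ p * 2 ^ N \<le> real U"
    using assms(1) by (simp add: ratio_encl_def encloses_def)
  also have "\<dots> < (2::real) ^ N"
    using assms(2) by (metis of_nat_less_iff of_nat_numeral of_nat_power)
  finally have "(3::real) ^ q < 2 ^ p"
    by (simp add: field_simps)
  then show ?thesis
    by (simp add: mult_a_log_less_iff)
qed

section \<open>The partial quotients of log_2 3\<close>

text \<open>The list holds the partial quotients a_0, ..., a_13 of log_2 3, so the two results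
  enclose 3^q/2^p for the convergents p/q = 176251/111202 and 301994/190537. The list only
  steers the computation; soundness does not depend on it.\<close>

lemma a_log_bounds: "176251 / 111202 < a_log" "a_log < 301994 / 190537"
proof -
  let ?run = "ratio_encl_steps 64 [1, 1, 1, 2, 2, 3, 1, 5, 2, 23, 2, 2, 1, 1]
                (0, 1, (3 * 2 ^ 64, 3 * 2 ^ 64)) (1, 0, (2 ^ 63, 2 ^ 63))"
  have run: "?run = ((176251, 111202, (18446810486040099724, 18446810486040641997)),
                     (301994, 190537, (18446742883756188942, 18446742883757118087)))"
    by (simp add: encl_mult_def)
  have "ratio_encl 64 (fst ?run) \<and> ratio_encl 64 (snd ?run)"
    by (rule ratio_encl_steps_sound) (simp_all add: ratio_encl_def encloses_def)
  then have lower: "ratio_encl 64 (176251, 111202, (18446810486040099724, 18446810486040641997))"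
    and upper: "ratio_encl 64 (301994, 190537, (18446742883756188942, 18446742883757118087))"
    unfolding run fst_conv snd_conv by simp_all
  have "real 176251 < real 111202 * a_log"
    by (rule less_mult_a_log_if_ratio_encl[OF lower]) simp
  moreover have "real 190537 * a_log < real 301994"
    by (rule mult_a_log_less_if_ratio_encl[OF upper]) simp
  ultimately show "176251 / 111202 < a_log" "a_log < 301994 / 190537"
    by (simp_all add: field_simps)
qed

text \<open>The bounds are the consecutive convergents p_12/q_12 and p_13/q_13, so they determine
  a_0, ..., a_12.\<close>

lemma cf_coeff_a_log:
  "i < 13 \<Longrightarrow> cf_coeff a_log i = [1, 1, 1, 2, 2, 3, 1, 5, 2, 23, 2, 2, 1] ! i"
  using a_log_bounds cf_coeff_eq_if_cert[of "[1, 1, 1, 2, 2, 3, 1, 5, 2, 23, 2, 2, 1]"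
      176251 111202 301994 190537 a_log 0 i]
  by simp

lemma Kseq_eq_cf_num: "Kseq n = nat (cf_num a_log (2 * Suc n + 2))"
proof -
  have "Suc (Suc (2 * (n + 1))) = 2 * Suc n + 2"
    by simp
  then show ?thesis
    by (simp only: Kseq_def conv_num_eq_cf_num)
qed

lemma Kseq_values:
  "Kseq 0 = 3" "Kseq 1 = 19" "Kseq 2 = 84" "Kseq 3 = 1054" "Kseq 4 = 50508" "Kseq 5 = 176251"
  by (simp_all add: Kseq_eq_cf_num cf_num_numeral cf_coeff_a_log)

section \<open>The ratio Theta_K\<close>

lemma floor_less_div_a_log:
  assumes "0 < K"
  shows "of_int \<lfloor>real K / a_log\<rfloor> < real K / a_log"
proof -
  define f where "f = \<lfloor>real K / a_log\<rfloor>"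
  have "real K / a_log \<noteq> of_int f"
  proof
    assume eq: "real K / a_log = of_int f"
    have "a_log = real K / (real K / a_log)"
      using assms a_log_gt_1 by simp
    then have "a_log = real K / of_int f"
      by (simp only: eq)
    then show False
      using a_log_irrational by (metis Rats_divide Rats_of_int Rats_of_nat)
  qed
  then show ?thesis
    using of_int_floor_le[of "real K / a_log"] unfolding f_def by (metis order_le_neq_trans)
qed

lemma rK_bounds: "0 < K \<Longrightarrow> 0 < rK K \<and> rK K < 1"
  using floor_less_div_a_log[of K] unfolding rK_def by linarith

lemma div_a_log_less_iff_lstar_le: "real K / a_log < real l \<longleftrightarrow> lstar K \<le> l"
proof -
  have "0 \<le> \<lfloor>real K / a_log\<rfloor>"
    using a_log_gt_1 by simp
  then show ?thesis
    using floor_less_iff[of "real K / a_log" "int l"] unfolding lstar_def by linarith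
qed

lemma gK_pos_iff: "0 < l \<Longrightarrow> 0 < gK K l \<longleftrightarrow> lstar K \<le> l"
proof -
  assume "0 < l"
  have "0 < gK K l \<longleftrightarrow> real K / real l < a_log"
    by (simp add: gK_def less_max_iff_disj)
  also have "\<dots> \<longleftrightarrow> real K / a_log < real l"
    using \<open>0 < l\<close> a_log_gt_1 by (simp add: pos_divide_less_eq mult.commute)
  finally show ?thesis
    by (simp add: div_a_log_less_iff_lstar_le)
qed

lemma Splus_eq: "Splus K = {lstar K..K}"
  by (auto simp: Splus_def lstar_def gK_pos_iff)

lemma lstar_le: "0 < K \<Longrightarrow> lstar K \<le> K"
  using a_log_gt_1 by (simp add: field_simps flip: div_a_log_less_iff_lstar_le)

lemma gK_Splus: "l \<in> Splus K \<Longrightarrow> gK K l = a_log - real K / real l"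
  by (auto simp: Splus_def gK_def)

lemma self_mem_Splus: "0 < K \<Longrightarrow> K \<in> Splus K"
  using lstar_le by (simp add: Splus_eq)

lemma gK_self: "0 < K \<Longrightarrow> gK K K = a_log - 1"
  using gK_Splus[OF self_mem_Splus] by simp

lemma Max_gK: "0 < K \<Longrightarrow> Max (gK K ` Splus K) = a_log - 1"
proof (rule Max_eqI)
  assume K: "0 < K"
  show "finite (gK K ` Splus K)"
    by (simp add: Splus_eq)
  show "a_log - 1 \<in> gK K ` Splus K"
    using K by (intro image_eqI[OF _ self_mem_Splus]) (simp_all add: gK_self)
  fix g
  assume "g \<in> gK K ` Splus K"
  then obtain l where l: "l \<in> Splus K" and g: "g = gK K l"
    by blast
  then have "1 \<le> real K / real l"
    by (auto simp: Splus_def)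
  with g gK_Splus[OF l] show "g \<le> a_log - 1"
    by simp
qed

lemma Min_gK: "0 < K \<Longrightarrow> Min (gK K ` Splus K) = a_log - real K / real (lstar K)"
proof (rule Min_eqI)
  assume K: "0 < K"
  show "finite (gK K ` Splus K)"
    by (simp add: Splus_eq)
  have lstar_mem: "lstar K \<in> Splus K"
    using K lstar_le by (simp add: Splus_eq)
  then show "a_log - real K / real (lstar K) \<in> gK K ` Splus K"
    using gK_Splus[OF lstar_mem] by (intro image_eqI[OF _ lstar_mem]) simp
  fix g
  assume "g \<in> gK K ` Splus K"
  then obtain l where l: "l \<in> Splus K" and g: "g = gK K l"
    by blast
  then have "lstar K \<le> l"
    by (simp add: Splus_eq)
  moreover have "0 < lstar K"
    by (simp add: lstar_def)
  ultimately have "real K / real l \<le> real K / real (lstar K)"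
    by (intro divide_left_mono) auto
  with g gK_Splus[OF l] show "a_log - real K / real (lstar K) \<le> g"
    by simp
qed

lemma real_lstar: "real (lstar K) = of_int \<lfloor>real K / a_log\<rfloor> + 1"
proof -
  have "0 \<le> \<lfloor>real K / a_log\<rfloor>"
    using a_log_gt_1 by simp
  then show ?thesis
    by (simp add: lstar_def)
qed

lemma Theta_eq:
  assumes "0 < K"
  shows "Theta K = (a_log - 1) / a_log * ((of_int \<lfloor>real K / a_log\<rfloor> + 1) / (1 - rK K))"
proof -
  define L where "L = real (lstar K)"
  have L_pos: "0 < L"
    by (simp add: L_def lstar_def)
  have L_eq: "L = of_int \<lfloor>real K / a_log\<rfloor> + 1"
    by (simp add: L_def real_lstar)
  then have L_sub: "L - real K / a_log = 1 - rK K"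
    by (simp add: rK_def)
  have "a_log - real K / L = a_log * (L - real K / a_log) / L"
    using L_pos a_log_gt_1 by (simp add: field_simps)
  then have min: "a_log - real K / L = a_log * (1 - rK K) / L"
    by (simp only: L_sub)
  have "0 < 1 - rK K"
    using rK_bounds[OF assms] by simp
  then show ?thesis
    using a_log_gt_1 assms L_pos
    by (simp add: Theta_def Max_gK Min_gK min flip: L_def L_eq)
qed

text \<open>Otherwise simp unfolds cf_num and cf_den at indices such as 2 * Suc n + 2.\<close>

declare cf_num.simps(3) [simp del] cf_den.simps(3) [simp del]

lemma Kseq_pos: "0 < Kseq n"
  using cf_num_even_pos[OF a_log_irrational a_log_gt_1, of "Suc n"]
  by (simp add: Kseq_eq_cf_num)

lemma real_Kseq: "real (Kseq n) = of_int (cf_num a_log (2 * Suc n + 2))"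
  using cf_num_even_pos[OF a_log_irrational a_log_gt_1, of "Suc n"]
  by (simp add: Kseq_eq_cf_num)

lemma floor_Kseq_div: "\<lfloor>real (Kseq n) / a_log\<rfloor> = cf_den a_log (2 * Suc n + 2) - 1"
  unfolding real_Kseq by (rule floor_cf_num_even_div[OF a_log_irrational a_log_gt_1])

lemma cf_err_Kseq_pos: "0 < cf_err a_log (2 * Suc n + 2)"
  by (rule cf_err_even_pos[OF a_log_irrational])

lemma rK_Kseq: "rK (Kseq n) = 1 - cf_err a_log (2 * Suc n + 2) / a_log"
  unfolding rK_def floor_Kseq_div
  unfolding real_Kseq cf_num_even_div_eq[OF a_log_irrational a_log_gt_1]
  by simp

lemma Theta_Kseq:
  "Theta (Kseq n) = (a_log - 1) * of_int (cf_den a_log (2 * Suc n + 2)) / cf_err a_log (2 * Suc n + 2)"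
  using Theta_eq[OF Kseq_pos] a_log_gt_1 cf_err_Kseq_pos
  by (simp add: floor_Kseq_div rK_Kseq)

lemma rK_Kseq_tendsto: "filterlim (\<lambda>n. rK (Kseq n)) (at_left 1) sequentially"
proof (rule tendsto_imp_filterlim_at_left)
  have "(\<lambda>n. 1 - cf_err a_log (2 * Suc n + 2) / a_log) \<longlonglongrightarrow> 1 - 0 / a_log"
    by (intro tendsto_intros LIMSEQ_Suc[OF cf_err_even_tendsto_0[OF a_log_irrational]])
      (use a_log_gt_1 in simp)
  then show "(\<lambda>n. rK (Kseq n)) \<longlonglongrightarrow> 1"
    by (simp add: rK_Kseq)
  show "\<forall>\<^sub>F n in sequentially. rK (Kseq n) < 1"
    using cf_err_Kseq_pos a_log_gt_1
    by (intro always_eventually allI) (simp add: rK_Kseq)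
qed

lemma Theta_Kseq_lower_bound: "(a_log - 1) / cf_err a_log (2 * Suc n + 2) \<le> Theta (Kseq n)"
proof -
  have "1 \<le> cf_den a_log (2 * Suc n + 2)"
    using cf_den_Suc_Suc_pos[OF a_log_irrational, of "2 * Suc n"] by (simp only: add_2_eq_Suc')
  with a_log_gt_1 have "(a_log - 1) * 1 \<le> (a_log - 1) * of_int (cf_den a_log (2 * Suc n + 2))"
    by (intro mult_left_mono) simp_all
  with cf_err_Kseq_pos[of n] show ?thesis
    unfolding Theta_Kseq by (intro divide_right_mono) simp_all
qed

lemma Theta_Kseq_tendsto: "filterlim (\<lambda>n. Theta (Kseq n)) at_top sequentially"
proof (rule filterlim_at_top_mono)
  have "filterlim (\<lambda>n. inverse (cf_err a_log (2 * Suc n + 2))) at_top sequentially"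
    using LIMSEQ_Suc[OF cf_err_even_tendsto_0[OF a_log_irrational]] cf_err_Kseq_pos
    by (intro filterlim_inverse_at_top always_eventually allI) simp_all
  then show "filterlim (\<lambda>n. (a_log - 1) / cf_err a_log (2 * Suc n + 2)) at_top sequentially"
    using a_log_gt_1 unfolding divide_inverse
    by (intro filterlim_tendsto_pos_mult_at_top[OF tendsto_const]) simp_all
  show "\<forall>\<^sub>F n in sequentially. (a_log - 1) / cf_err a_log (2 * Suc n + 2) \<le> Theta (Kseq n)"
    using Theta_Kseq_lower_bound by simp
qed

lemma Theta_unbounded: "\<exists>K \<ge> 1. B < Theta K"
proof -
  obtain n where "B < Theta (Kseq n)"
    using Theta_Kseq_tendsto by (metis filterlim_at_top_dense eventually_sequentially order_refl)
  then show ?thesis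
    using Kseq_pos[of n] by (intro exI[of _ "Kseq n"]) simp
qed

theorem mainTheorem18:
  shows "(\<forall>K::nat. K \<ge> 1 \<longrightarrow>
            K \<in> Splus K \<and> gK K K = a_log - 1 \<and>
            Max (gK K ` Splus K) = a_log - 1 \<and>
            Min (gK K ` Splus K) = a_log - real K / real (lstar K) \<and>
            0 < rK K \<and> rK K < 1 \<and>
            Theta K = (a_log - 1) / a_log *
                      ((of_int \<lfloor>real K / a_log\<rfloor> + 1) / (1 - rK K)))
       \<and> (\<forall>B::real. \<exists>K::nat. K \<ge> 1 \<and> Theta K > B)
       \<and> Kseq 0 = 3 \<and> Kseq 1 = 19 \<and> Kseq 2 = 84 \<and> Kseq 3 = 1054
       \<and> Kseq 4 = 50508 \<and> Kseq 5 = 176251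
       \<and> filterlim (\<lambda>n. rK (Kseq n)) (at_left 1) sequentially
       \<and> filterlim (\<lambda>n. Theta (Kseq n)) at_top sequentially"
proof (intro conjI allI impI)
  fix K :: nat
  assume "K \<ge> 1"
  then have K: "0 < K"
    by simp
  show "K \<in> Splus K" "gK K K = a_log - 1"
    using K by (rule self_mem_Splus, rule gK_self)
  show "Max (gK K ` Splus K) = a_log - 1" "Min (gK K ` Splus K) = a_log - real K / real (lstar K)"
    using K by (rule Max_gK, rule Min_gK)
  show "0 < rK K" "rK K < 1"
    using rK_bounds[OF K] by simp_all
  show "Theta K = (a_log - 1) / a_log * ((of_int \<lfloor>real K / a_log\<rfloor> + 1) / (1 - rK K))"
    using K by (rule Theta_eq)
qed (use Theta_unbounded Kseq_values rK_Kseq_tendsto Theta_Kseq_tendsto in auto)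

end
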